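(* (i) If $\alpha\le\frac12$, then $\theta(y;\alpha,\lambda)=1$ for all $y\ge0$ and all $\lambda>0$. (ii) If $\alpha>\frac12$, then $\theta(y;\alpha,\lambda)<1$ for all $y\ge0$ and all $\lambda>0$.
   Context: For a countable set $P\subseteq\mathbb R\times[0,\infty)$, $\Gamma(P)$ denotes the graph on vertex set $P$ in which distinct points $(x,y),(x',y')$ are adjacent iff $|x-x'|<e^{\frac12(y+y')}$. For $\alpha,\lambda>0$, $\mathcal P_{\alpha,\lambda}$ is a Poisson point process on $\mathbb R\times[0,\infty)$ with intensity function $\lambda e^{-\alpha y}$. For $y\ge 0$, $\theta(y;\alpha,\lambda)$ is the probability that $\Gamma(\{(0,y)\}\cup\mathcal P_{\alpha,\lambda})$ contains an infinite connected component containing $(0,y)$. *)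

theory Defs
  imports "HOL-Probability.Probability"
begin

definition gamma_adj :: "real \<times> real \<Rightarrow> real \<times> real \<Rightarrow> bool" where
  "gamma_adj p q \<longleftrightarrow> p \<noteq> q \<and> \<bar>fst p - fst q\<bar> < exp ((snd p + snd q) / 2)"

definition gamma_edges :: "(real \<times> real) set \<Rightarrow> ((real \<times> real) \<times> (real \<times> real)) set" where
  "gamma_edges V = {(p, q). p \<in> V \<and> q \<in> V \<and> gamma_adj p q}"

definition gamma_component :: "(real \<times> real) set \<Rightarrow> real \<times> real \<Rightarrow> (real \<times> real) set" where
  "gamma_component V v = {w. (v, w) \<in> (gamma_edges V)\<^sup>*}"

definition intensity :: "real \<Rightarrow> real \<Rightarrow> (real \<times> real) measure" where
  "intensity \<alpha> lam = density lborel
     (\<lambda>p. ennreal (if snd p \<ge> 0 then lam * exp (- \<alpha> * snd p) else 0))"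

definition poisson_pp :: "'a measure \<Rightarrow> real \<Rightarrow> real \<Rightarrow> ('a \<Rightarrow> (real \<times> real) set) \<Rightarrow> bool" where
  "poisson_pp M \<alpha> lam P \<longleftrightarrow>
     (\<forall>\<omega>\<in>space M. P \<omega> \<subseteq> UNIV \<times> {0..}) \<and>
     (\<forall>A \<in> sets borel. emeasure (intensity \<alpha> lam) A < \<infinity> \<longrightarrow>
        (AE \<omega> in M. finite (P \<omega> \<inter> A)) \<and>
        (\<lambda>\<omega>. card (P \<omega> \<inter> A)) \<in> measurable M (count_space UNIV) \<and>
        (\<forall>k::nat. measure M {\<omega> \<in> space M. card (P \<omega> \<inter> A) = k} =
            measure (intensity \<alpha> lam) A ^ k / fact k * exp (- measure (intensity \<alpha> lam) A))) \<and>
     (\<forall>(I::nat set) (A::nat \<Rightarrow> (real \<times> real) set). finite I \<longrightarrow>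
        (\<forall>i\<in>I. A i \<in> sets borel \<and> emeasure (intensity \<alpha> lam) (A i) < \<infinity>) \<longrightarrow>
        disjoint_family_on A I \<longrightarrow>
        prob_space.indep_vars M (\<lambda>_. count_space UNIV) (\<lambda>i \<omega>. card (P \<omega> \<inter> A i)) I)"

end

theory Submission imports Defs "HOL-Real_Asymp.Real_Asymp" begin

text \<open>The neighbours of the root (0,y) are the points of the strip
  |x| < e^{(y+t)/2}, t \<ge> 0. Its intensity measure is \<integral> 2 \<lambda> e^{y/2} e^{(1/2 - \<alpha>) t} dt.
  For \<alpha> \<le> 1/2 this diverges, so the root a.s. has infinitely many neighbours; for \<alpha> > 1/2
  it is finite, so with positive probability the root has no neighbour at all and is
  an isolated vertex.\<close>

definition root_strip :: "real \<Rightarrow> real set \<Rightarrow> (real \<times> real) set" where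
  "root_strip y S = {p. snd p \<in> S \<and> \<bar>fst p\<bar> < exp ((y + snd p) / 2)}"

lemma gamma_component_superset_root_strip:
  "P \<inter> root_strip y S \<subseteq> gamma_component (insert (0, y) P) (0, y)"
proof
  fix q assume q: "q \<in> P \<inter> root_strip y S"
  show "q \<in> gamma_component (insert (0, y) P) (0, y)"
  proof (cases "q = (0, y)")
    case True
    then show ?thesis by (simp add: gamma_component_def)
  next
    case False
    with q have "((0, y), q) \<in> gamma_edges (insert (0, y) P)"
      by (auto simp: gamma_edges_def gamma_adj_def root_strip_def)
    then show ?thesis unfolding gamma_component_def by auto
  qed
qed

lemma gamma_component_isolated_root:
  assumes "P \<inter> root_strip y UNIV = {}"
  shows "gamma_component (insert (0, y) P) (0, y) = {(0, y)}"
proof -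
  have "w = (0, y)" if "((0, y), w) \<in> (gamma_edges (insert (0, y) P))\<^sup>*" for w
    using that
  proof (induction rule: rtrancl_induct)
    case base
    then show ?case by simp
  next
    case (step z w)
    then have "((0, y), w) \<in> gamma_edges (insert (0, y) P)" by simp
    then show ?case using assms by (auto simp: gamma_edges_def gamma_adj_def root_strip_def)
  qed
  then show ?thesis by (auto simp: gamma_component_def)
qed

lemma root_strip_sets [measurable]: "S \<in> sets borel \<Longrightarrow> root_strip y S \<in> sets borel"
proof -
  assume [measurable]: "S \<in> sets borel"
  have "{p \<in> space (borel \<Otimes>\<^sub>M borel). snd p \<in> S \<and> \<bar>fst p\<bar> < exp ((y + snd p) / 2)}
          \<in> sets (borel \<Otimes>\<^sub>M borel)"
    by measurable
  then show ?thesis unfolding root_strip_def borel_prod space_borel by simp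
qed

lemma intensity_density_measurable [measurable]:
  "(\<lambda>p::real \<times> real. ennreal (if 0 \<le> snd p then lam * exp (- \<alpha> * snd p) else 0))
     \<in> borel_measurable borel"
proof -
  have "(\<lambda>p::real \<times> real. ennreal (if 0 \<le> snd p then lam * exp (- \<alpha> * snd p) else 0))
          \<in> borel_measurable (borel \<Otimes>\<^sub>M borel)"
    by measurable
  then show ?thesis by (simp add: borel_prod)
qed

lemma emeasure_intensity_root_strip:
  assumes S: "S \<in> sets borel"
  shows "emeasure (intensity \<alpha> lam) (root_strip y S) =
    (\<integral>\<^sup>+t. ennreal (indicator S t * (if t \<ge> 0 then lam * exp (- \<alpha> * t) else 0)
                    * (2 * exp ((y + t) / 2))) \<partial>lborel)"
proof -
  let ?f = "\<lambda>p::real \<times> real. ennreal (if snd p \<ge> 0 then lam * exp (- \<alpha> * snd p) else 0)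
                                * indicator (root_strip y S) p"
  have "emeasure (intensity \<alpha> lam) (root_strip y S) = (\<integral>\<^sup>+p. ?f p \<partial>(lborel \<Otimes>\<^sub>M lborel))"
    unfolding intensity_def using S by (subst emeasure_density) (auto simp: lborel_prod)
  also have "\<dots> = (\<integral>\<^sup>+t. (\<integral>\<^sup>+x. ?f (x, t) \<partial>lborel) \<partial>lborel)"
    using S by (subst lborel_pair.nn_integral_snd[symmetric]) (auto simp: lborel_prod)
  also have "\<dots> = (\<integral>\<^sup>+t. ennreal (indicator S t * (if t \<ge> 0 then lam * exp (- \<alpha> * t) else 0)
                                 * (2 * exp ((y + t) / 2))) \<partial>lborel)"
  proof (rule nn_integral_cong)
    fix t :: real
    let ?d = "if t \<ge> 0 then lam * exp (- \<alpha> * t) else 0"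
    have "(\<integral>\<^sup>+x. ?f (x, t) \<partial>lborel)
            = (\<integral>\<^sup>+x. ennreal ?d * indicator S t
                      * indicator {- exp ((y + t) / 2) <..< exp ((y + t) / 2)} x \<partial>lborel)"
      by (rule nn_integral_cong) (auto simp: root_strip_def indicator_def abs_less_iff)
    also have "\<dots> = ennreal ?d * indicator S t * (2 * exp ((y + t) / 2))"
      by (subst nn_integral_cmult) auto
    finally show "(\<integral>\<^sup>+x. ?f (x, t) \<partial>lborel) = ennreal (indicator S t * ?d * (2 * exp ((y + t) / 2)))"
      by (cases "t \<in> S") (auto simp: ennreal_mult' ennreal_mult'' mult_ac)
  qed
  finally show ?thesis .
qed

lemma emeasure_intensity_root_strip_finite:
  assumes "\<alpha> > 1/2" "lam > 0"
  shows "emeasure (intensity \<alpha> lam) (root_strip y UNIV) < \<infinity>"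
proof -
  define l where "l = \<alpha> - 1/2"
  have l: "l > 0" using assms by (simp add: l_def)
  define c where "c = 2 * lam * exp (y / 2) / l"
  have "emeasure (intensity \<alpha> lam) (root_strip y UNIV)
          = (\<integral>\<^sup>+t. ennreal c * ennreal (exponential_density l t) \<partial>lborel)"
  proof (subst emeasure_intensity_root_strip, simp, rule nn_integral_cong)
    fix t :: real
    have "lam * exp (- \<alpha> * t) * (2 * exp ((y + t) / 2)) = c * (l * exp (- t * l))"
      using l unfolding c_def l_def by (simp add: exp_add[symmetric] field_simps mult_exp_exp)
    then show "ennreal (indicator UNIV t * (if 0 \<le> t then lam * exp (- \<alpha> * t) else 0)
                          * (2 * exp ((y + t) / 2)))
                 = ennreal c * ennreal (exponential_density l t)"
      using l assms unfolding c_def by (auto simp: exponential_density_def ennreal_mult'[symmetric])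
  qed
  also have "\<dots> = ennreal c * emeasure (density lborel (exponential_density l)) UNIV"
    by (subst nn_integral_cmult) (auto simp: emeasure_density)
  also have "emeasure (density lborel (exponential_density l)) UNIV = 1"
    using prob_space.emeasure_space_1[OF prob_space_exponential_density[OF l]] by simp
  finally show ?thesis by simp
qed

lemma emeasure_intensity_root_strip_bounded:
  assumes "lam > 0" "\<alpha> \<ge> 0"
  shows "emeasure (intensity \<alpha> lam) (root_strip y {0..n}) < \<infinity>"
proof -
  have "emeasure (intensity \<alpha> lam) (root_strip y {0..n})
          \<le> (\<integral>\<^sup>+t. ennreal (2 * lam * exp ((y + n) / 2)) * indicator {0..n} t \<partial>lborel)"
  proof (subst emeasure_intensity_root_strip, simp, rule nn_integral_mono)
    fix t :: real
    have "lam * exp (- \<alpha> * t) * (2 * exp ((y + t) / 2)) \<le> 2 * lam * exp ((y + n) / 2)"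
      if "0 \<le> t" "t \<le> n"
    proof -
      have "exp (- \<alpha> * t) * exp ((y + t) / 2) \<le> 1 * exp ((y + n) / 2)"
        using that assms by (intro mult_mono) auto
      then show ?thesis using assms by (simp add: algebra_simps)
    qed
    then show "ennreal (indicator {0..n} t * (if 0 \<le> t then lam * exp (- \<alpha> * t) else 0)
                          * (2 * exp ((y + t) / 2)))
                 \<le> ennreal (2 * lam * exp ((y + n) / 2)) * indicator {0..n} t"
      by (auto simp: indicator_def intro: ennreal_leI)
  qed
  also have "\<dots> < \<infinity>"
    by (cases "n \<ge> 0") (auto simp: nn_integral_cmult_indicator ennreal_mult_less_top)
  finally show ?thesis .
qed

lemma emeasure_intensity_root_strip_lower:
  assumes "\<alpha> \<le> 1/2" "lam > 0" "y \<ge> 0" "n \<ge> 0"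
  shows "ennreal (2 * lam * n) \<le> emeasure (intensity \<alpha> lam) (root_strip y {0..n})"
proof -
  have "ennreal (2 * lam * n) = (\<integral>\<^sup>+t. ennreal (2 * lam) * indicator {0..n} t \<partial>lborel)"
    using assms by (subst nn_integral_cmult_indicator) (auto simp: ennreal_mult)
  also have "\<dots> \<le> emeasure (intensity \<alpha> lam) (root_strip y {0..n})"
  proof (subst emeasure_intensity_root_strip, simp, rule nn_integral_mono)
    fix t :: real
    have "2 * lam \<le> lam * exp (- \<alpha> * t) * (2 * exp ((y + t) / 2))" if "0 \<le> t"
    proof -
      have "exp (- \<alpha> * t) * exp ((y + t) / 2) = exp (y / 2 + (1/2 - \<alpha>) * t)"
        by (simp add: mult_exp_exp algebra_simps add_divide_distrib)
      also have "\<dots> \<ge> 1" using that assms by simp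
      finally show ?thesis using assms by (simp add: algebra_simps)
    qed
    then show "ennreal (2 * lam) * indicator {0..n} t
                 \<le> ennreal (indicator {0..n} t * (if 0 \<le> t then lam * exp (- \<alpha> * t) else 0)
                             * (2 * exp ((y + t) / 2)))"
      by (auto simp: indicator_def intro: ennreal_leI)
  qed
  finally show ?thesis .
qed

lemma poisson_pp_count:
  assumes "poisson_pp M \<alpha> lam P" "A \<in> sets borel" "emeasure (intensity \<alpha> lam) A < \<infinity>"
  shows "AE \<omega> in M. finite (P \<omega> \<inter> A)"
    and "(\<lambda>\<omega>. card (P \<omega> \<inter> A)) \<in> measurable M (count_space UNIV)"
    and "measure M {\<omega> \<in> space M. card (P \<omega> \<inter> A) = k} =
           measure (intensity \<alpha> lam) A ^ k / fact k * exp (- measure (intensity \<alpha> lam) A)"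
  using assms unfolding poisson_pp_def by blast+

lemma poisson_cdf_tendsto_zero:
  fixes m :: "nat \<Rightarrow> real"
  assumes "filterlim m at_top sequentially"
  shows "(\<lambda>n. \<Sum>j<k. m n ^ j / fact j * exp (- m n)) \<longlonglongrightarrow> 0"
proof -
  have "((\<lambda>n. m n ^ j / fact j * exp (- m n)) \<longlongrightarrow> 0) sequentially" for j
  proof -
    have "((\<lambda>x::real. x ^ j / fact j * exp (- x)) \<longlongrightarrow> 0) at_top" by real_asymp
    from filterlim_compose[OF this assms] show ?thesis by simp
  qed
  then show ?thesis by (intro tendsto_null_sum) auto
qed

lemma (in prob_space) poisson_pp_AE_infinite_Union:
  assumes pp: "poisson_pp M \<alpha> lam P"
    and A [measurable]: "\<And>n. A n \<in> sets borel"
    and A_finite: "\<And>n. emeasure (intensity \<alpha> lam) (A n) < \<infinity>"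
    and A_unbounded: "filterlim (\<lambda>n. measure (intensity \<alpha> lam) (A n)) at_top sequentially"
  shows "AE \<omega> in M. infinite (\<Union>n. P \<omega> \<inter> A n)"
proof -
  define m where "m n = measure (intensity \<alpha> lam) (A n)" for n
  have [measurable]: "(\<lambda>\<omega>. card (P \<omega> \<inter> A n)) \<in> measurable M (count_space UNIV)" for n
    using poisson_pp_count(2)[OF pp A A_finite] .
  define E where "E k = {\<omega> \<in> space M. \<forall>n. card (P \<omega> \<inter> A n) < k}" for k
  have E_sets: "E k \<in> sets M" for k unfolding E_def by measurable
  have E_le: "measure M (E k) \<le> (\<Sum>j<k. m n ^ j / fact j * exp (- m n))" for k n
  proof -
    have "measure M (E k) \<le> measure M (\<Union>j<k. {\<omega> \<in> space M. card (P \<omega> \<inter> A n) = j})"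
      unfolding E_def by (intro finite_measure_mono) auto
    also have "\<dots> \<le> (\<Sum>j<k. measure M {\<omega> \<in> space M. card (P \<omega> \<inter> A n) = j})"
      by (intro finite_measure_subadditive_finite) auto
    finally show ?thesis by (simp add: poisson_pp_count(3)[OF pp A A_finite] m_def)
  qed
  have "measure M (E k) \<le> 0" for k
  proof (rule tendsto_lowerbound[OF poisson_cdf_tendsto_zero])
    show "filterlim m at_top sequentially" using A_unbounded unfolding m_def .
  qed (use E_le in \<open>auto intro: always_eventually\<close>)
  then have "measure M (E k) = 0" for k
    by (meson antisym measure_nonneg)
  then have "AE \<omega> in M. \<omega> \<notin> E k" for k
    using E_sets by (intro AE_not_in) (simp add: null_sets_def emeasure_eq_measure)
  then have "AE \<omega> in M. \<forall>k. \<omega> \<notin> E k" by (simp add: AE_all_countable)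
  then show ?thesis
  proof (rule AE_mp, intro AE_I2 impI notI)
    fix \<omega> assume \<omega>: "\<omega> \<in> space M" "\<forall>k. \<omega> \<notin> E k" and fin: "finite (\<Union>n. P \<omega> \<inter> A n)"
    have "card (P \<omega> \<inter> A n) < Suc (card (\<Union>n. P \<omega> \<inter> A n))" for n
      by (intro le_imp_less_Suc card_mono[OF fin]) blast
    with \<omega> show False unfolding E_def by blast
  qed
qed

lemma (in prob_space) poisson_pp_not_AE_hits:
  assumes pp: "poisson_pp M \<alpha> lam P"
    and A [measurable]: "A \<in> sets borel"
    and A_finite: "emeasure (intensity \<alpha> lam) A < \<infinity>"
  shows "\<not> (AE \<omega> in M. P \<omega> \<inter> A \<noteq> {})"
proof
  have [measurable]: "(\<lambda>\<omega>. card (P \<omega> \<inter> A)) \<in> measurable M (count_space UNIV)"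
    using poisson_pp_count(2)[OF pp A A_finite] .
  define Z where "Z = {\<omega> \<in> space M. card (P \<omega> \<inter> A) = 0}"
  have Z_sets: "Z \<in> sets M" unfolding Z_def by measurable
  have "measure M Z = exp (- measure (intensity \<alpha> lam) A)"
    using poisson_pp_count(3)[OF pp A A_finite, of 0] unfolding Z_def by simp
  then have Z_pos: "measure M Z > 0" by simp
  assume "AE \<omega> in M. P \<omega> \<inter> A \<noteq> {}"
  with poisson_pp_count(1)[OF pp A A_finite] have "AE \<omega> in M. \<omega> \<notin> Z"
    unfolding Z_def by eventually_elim auto
  then have "emeasure M Z = 0"
    using Z_sets by (subst (asm) AE_iff_measurable[of Z]) (auto simp: Z_def)
  with Z_pos show False by (simp add: emeasure_eq_measure)
qed

lemma (in prob_space) AE_infinite_root_component: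
  assumes "\<alpha> \<le> 1/2" "\<alpha> > 0" "lam > 0" "y \<ge> 0" and pp: "poisson_pp M \<alpha> lam P"
  shows "AE \<omega> in M. infinite (gamma_component (insert (0, y) (P \<omega>)) (0, y))"
proof -
  define A where "A n = root_strip y {0..real n}" for n
  have A_sets: "A n \<in> sets borel" for n
    unfolding A_def by measurable
  have A_finite: "emeasure (intensity \<alpha> lam) (A n) < \<infinity>" for n
    unfolding A_def by (rule emeasure_intensity_root_strip_bounded) (use assms in auto)
  have A_lower: "2 * lam * real n \<le> measure (intensity \<alpha> lam) (A n)" for n
  proof -
    have "ennreal (2 * lam * real n) \<le> emeasure (intensity \<alpha> lam) (A n)"
      unfolding A_def by (rule emeasure_intensity_root_strip_lower) (use assms in auto)
    also have "\<dots> = ennreal (measure (intensity \<alpha> lam) (A n))"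
      using A_finite[of n] by (simp add: emeasure_eq_ennreal_measure less_top)
    finally show ?thesis by (simp add: ennreal_le_iff)
  qed
  have "filterlim (\<lambda>n. 2 * lam * real n) at_top sequentially"
    using assms by (intro filterlim_tendsto_pos_mult_at_top[OF tendsto_const])
                   (auto simp: filterlim_real_sequentially)
  then have "filterlim (\<lambda>n. measure (intensity \<alpha> lam) (A n)) at_top sequentially"
    by (rule filterlim_at_top_mono) (use A_lower in \<open>auto intro: always_eventually\<close>)
  with pp A_sets A_finite have "AE \<omega> in M. infinite (\<Union>n. P \<omega> \<inter> A n)"
    by (rule poisson_pp_AE_infinite_Union)
  then show ?thesis
  proof eventually_elim
    case (elim \<omega>)
    have "(\<Union>n. P \<omega> \<inter> A n) \<subseteq> gamma_component (insert (0, y) (P \<omega>)) (0, y)"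
      using gamma_component_superset_root_strip unfolding A_def by blast
    with elim show ?case by (rule infinite_super[rotated])
  qed
qed

lemma (in prob_space) not_AE_infinite_root_component:
  assumes "\<alpha> > 1/2" "lam > 0" and pp: "poisson_pp M \<alpha> lam P"
  shows "\<not> (AE \<omega> in M. infinite (gamma_component (insert (0, y) (P \<omega>)) (0, y)))"
proof
  assume "AE \<omega> in M. infinite (gamma_component (insert (0, y) (P \<omega>)) (0, y))"
  then have "AE \<omega> in M. P \<omega> \<inter> root_strip y UNIV \<noteq> {}"
    by eventually_elim (use gamma_component_isolated_root in fastforce)
  with poisson_pp_not_AE_hits[OF pp _ emeasure_intensity_root_strip_finite[OF assms(1,2)]]
  show False by simp
qed

theorem lemma2p6:
  fixes \<alpha> lam :: real
  assumes "\<alpha> > 0" and "lam > 0"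
  shows "(\<alpha> \<le> 1/2 \<longrightarrow>
            (\<forall>y \<ge> 0. \<forall>(M :: 'a measure) P. prob_space M \<and> poisson_pp M \<alpha> lam P \<longrightarrow>
               (AE \<omega> in M. infinite (gamma_component (insert (0, y) (P \<omega>)) (0, y)))))
       \<and> (\<alpha> > 1/2 \<longrightarrow>
            (\<forall>y \<ge> 0. \<forall>(M :: 'a measure) P. prob_space M \<and> poisson_pp M \<alpha> lam P \<longrightarrow>
               \<not> (AE \<omega> in M. infinite (gamma_component (insert (0, y) (P \<omega>)) (0, y)))))"
  using prob_space.AE_infinite_root_component[of _ \<alpha> lam] assms
    prob_space.not_AE_infinite_root_component[of _ \<alpha> lam]
  by blast

end
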